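(* Let $p\ge 1$, let $\Theta$ be a $p\times p$ correlation matrix (real symmetric positive semi-definite with all diagonal entries equal to $1$), and let $\alpha\in\mathbb{R}^p$ with $\alpha_j\neq 0$ for all $j$. Define the $p\times p$ matrix $g(\Theta,\alpha)$ by $g_{ij}(\Theta,\alpha)=\Theta_{ij}\alpha_i\alpha_j$ for $i\neq j$ and $g_{ii}(\Theta,\alpha)=1$; equivalently $g(\Theta,\alpha)=\Theta\circ\alpha\alpha^{t}+I-D_\alpha^2$, where $\circ$ is the Hadamard (entrywise) product and $D_\alpha$ is the diagonal matrix with diagonal entries $\alpha_1,\dots,\alpha_p$. Let $\lambda_p$ be the minimal eigenvalue of $\Theta$, and let $\alpha_M=\max_j|\alpha_j|$ and $\alpha_m=\min_j|\alpha_j|$. If \[\lambda_p\ \ge\ \frac{\alpha_M^2-1}{\alpha_m^2},\] then $g(\Theta,\alpha)$ is positive semi-definite.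
   Context: The map $g$ is called the multiplicative link function. The hypothesis $\alpha_j\neq 0$ for all $j$ only ensures $\alpha_m>0$, so that the quotient in the condition is defined. *)

theory Defs
  imports "HOL-Analysis.Analysis"
begin

definition symmetric_mat :: "real^'n^'n \<Rightarrow> bool" where
  "symmetric_mat A \<longleftrightarrow> transpose A = A"

definition psd_mat :: "real^'n^'n \<Rightarrow> bool" where
  "psd_mat A \<longleftrightarrow> symmetric_mat A \<and> (\<forall>x. 0 \<le> x \<bullet> (A *v x))"

definition correlation_mat :: "real^'n^'n \<Rightarrow> bool" where
  "correlation_mat A \<longleftrightarrow> psd_mat A \<and> (\<forall>i. A $ i $ i = 1)"

definition is_eigenvalue :: "real^'n^'n \<Rightarrow> real \<Rightarrow> bool" where
  "is_eigenvalue A l \<longleftrightarrow> (\<exists>v. v \<noteq> 0 \<and> A *v v = l *\<^sub>R v)"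

definition is_min_eigenvalue :: "real^'n^'n \<Rightarrow> real \<Rightarrow> bool" where
  "is_min_eigenvalue A l \<longleftrightarrow> is_eigenvalue A l \<and> (\<forall>m. is_eigenvalue A m \<longrightarrow> l \<le> m)"

definition link_g :: "real^'n^'n \<Rightarrow> real^'n \<Rightarrow> real^'n^'n" where
  "link_g Theta a = (\<chi> i j. if i = j then 1 else Theta $ i $ j * a $ i * a $ j)"

end

theory Submission
  imports Defs
begin

text \<open>
  Writing \<open>D\<close> for the diagonal matrix of the \<open>\<alpha>\<^sub>i\<close>, the quadratic form of
  \<open>g(\<Theta>,\<alpha>)\<close> at \<open>x\<close> is \<open>y\<^sup>T\<Theta>y + \<Sum>\<^sub>i (1 - \<alpha>\<^sub>i\<^sup>2) x\<^sub>i\<^sup>2\<close> with \<open>y = Dx\<close>.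
  The smallest eigenvalue \<open>\<lambda>\<close> of \<open>\<Theta>\<close> is its minimal Rayleigh quotient, so
  \<open>y\<^sup>T\<Theta>y \<ge> \<lambda> \<Sum>\<^sub>i \<alpha>\<^sub>i\<^sup>2 x\<^sub>i\<^sup>2\<close> and the form is at least
  \<open>\<Sum>\<^sub>i (\<lambda>\<alpha>\<^sub>i\<^sup>2 + 1 - \<alpha>\<^sub>i\<^sup>2) x\<^sub>i\<^sup>2\<close>. Each coefficient is nonnegative: trivially if
  \<open>\<lambda> \<ge> 1\<close>, and otherwise \<open>(1 - \<lambda>)\<alpha>\<^sub>i\<^sup>2 \<le> \<alpha>\<^sub>M\<^sup>2 - \<lambda>\<alpha>\<^sub>m\<^sup>2 \<le> 1\<close>, using \<open>\<lambda> \<ge> 0\<close>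
  (as \<open>\<Theta>\<close> is positive semi-definite).
\<close>

lemma quadratic_nonneg_imp_linear_coeff_zero:
  fixes b c :: real
  assumes "\<And>t. 0 \<le> b * t + c * t\<^sup>2"
  shows "b = 0"
proof -
  have "\<bar>b\<bar> \<le> c" using assms[of 1] assms[of "-1"] by simp
  show ?thesis
  proof (cases "c = 0")
    case True
    with \<open>\<bar>b\<bar> \<le> c\<close> show ?thesis by simp
  next
    case False
    with \<open>\<bar>b\<bar> \<le> c\<close> have "c > 0" by linarith
    have "0 \<le> b * (- b / (2 * c)) + c * (- b / (2 * c))\<^sup>2" by (rule assms)
    also have "\<dots> = - b\<^sup>2 / (4 * c)" using \<open>c > 0\<close> by (simp add: field_simps power2_eq_square)
    finally show ?thesis using \<open>c > 0\<close> by (simp add: divide_le_0_iff)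
  qed
qed

lemma symmetric_mat_inner_commute:
  assumes "symmetric_mat A"
  shows "x \<bullet> (A *v y) = y \<bullet> (A *v x)"
proof -
  have "x \<bullet> (A *v y) = (transpose A *v x) \<bullet> y" by (simp add: dot_lmul_matrix)
  also have "\<dots> = y \<bullet> (A *v x)" using assms by (simp add: symmetric_mat_def inner_commute)
  finally show ?thesis .
qed

text \<open>
  A vector attaining a lower bound \<open>c\<close> of the Rayleigh quotient is an eigenvector:
  along the line \<open>v + t w\<close> with \<open>w = A v - c v\<close> the excess of the form over
  \<open>c |v + t w|\<^sup>2\<close> is \<open>2t |w|\<^sup>2 + O(t\<^sup>2)\<close>, which can only stay nonnegative if \<open>w = 0\<close>.
\<close>
lemma rayleigh_minimizer_is_eigenvector:
  fixes A :: "real^'n^'n"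
  assumes sym: "symmetric_mat A"
    and bound: "\<And>x. c * (x \<bullet> x) \<le> x \<bullet> (A *v x)"
    and attained: "v \<bullet> (A *v v) = c * (v \<bullet> v)"
  shows "A *v v = c *\<^sub>R v"
proof -
  define w where "w = A *v v - c *\<^sub>R v"
  have "0 \<le> 2 * (w \<bullet> w) * t + (w \<bullet> (A *v w) - c * (w \<bullet> w)) * t\<^sup>2" for t
  proof -
    have "w \<bullet> (A *v v) - c * (w \<bullet> v) = w \<bullet> w" by (simp add: w_def inner_diff_right)
    moreover have "0 \<le> (v + t *\<^sub>R w) \<bullet> (A *v (v + t *\<^sub>R w)) - c * ((v + t *\<^sub>R w) \<bullet> (v + t *\<^sub>R w))"
      using bound[of "v + t *\<^sub>R w"] by simp
    ultimately show ?thesis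
      using attained symmetric_mat_inner_commute[OF sym, of v w]
      by (simp add: matrix_vector_right_distrib matrix_vector_mult_scaleR
          inner_add_left inner_add_right inner_commute[of v w] algebra_simps power2_eq_square)
  qed
  then have "2 * (w \<bullet> w) = 0" by (rule quadratic_nonneg_imp_linear_coeff_zero)
  then show ?thesis by (simp add: w_def)
qed

text \<open>The minimum of the Rayleigh quotient over the (compact) unit sphere is an eigenvalue.\<close>
lemma symmetric_mat_rayleigh_eigenvalue:
  fixes A :: "real^'n^'n"
  assumes "symmetric_mat A"
  obtains mu where "is_eigenvalue A mu" and "\<And>y. mu * (y \<bullet> y) \<le> y \<bullet> (A *v y)"
proof -
  let ?f = "\<lambda>x::real^'n. x \<bullet> (A *v x)"
  have "sphere (0::real^'n) 1 \<noteq> {}" by (simp add: sphere_eq_empty)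
  moreover have "continuous_on (sphere 0 1) ?f"
    by (intro continuous_intros linear_continuous_on matrix_vector_mul_bounded_linear)
  ultimately obtain v where v: "v \<in> sphere 0 1" and vmin: "\<And>u. u \<in> sphere 0 1 \<Longrightarrow> ?f v \<le> ?f u"
    using continuous_attains_inf[OF compact_sphere] by blast
  define mu where "mu = ?f v"
  have bound: "mu * (y \<bullet> y) \<le> y \<bullet> (A *v y)" for y
  proof (cases "y = 0")
    case False
    define u where "u = (1 / norm y) *\<^sub>R y"
    have "u \<in> sphere 0 1" using False by (simp add: u_def)
    then have "mu \<le> ?f u" by (simp add: mu_def vmin)
    moreover have yu: "y = norm y *\<^sub>R u" using False by (simp add: u_def)
    have "?f y = (norm y)\<^sup>2 * ?f u"
      by (subst (1 2) yu) (simp add: matrix_vector_mult_scaleR power2_eq_square)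
    moreover have "(norm y)\<^sup>2 = y \<bullet> y" by (simp add: power2_norm_eq_inner)
    ultimately show ?thesis by (simp add: mult_left_mono mult.commute[of mu])
  qed simp
  have "v \<bullet> v = 1" using v by (simp add: norm_eq_1)
  then have "A *v v = mu *\<^sub>R v"
    by (intro rayleigh_minimizer_is_eigenvector[OF assms bound]) (simp add: mu_def)
  moreover have "v \<noteq> 0" using v by auto
  ultimately have "is_eigenvalue A mu" unfolding is_eigenvalue_def by blast
  then show thesis using that bound by blast
qed

lemma min_eigenvalue_le_rayleigh:
  assumes "symmetric_mat A" and "is_min_eigenvalue A lam"
  shows "lam * (y \<bullet> y) \<le> y \<bullet> (A *v y)"
proof -
  obtain mu where "is_eigenvalue A mu" and mu: "\<And>y. mu * (y \<bullet> y) \<le> y \<bullet> (A *v y)"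
    using symmetric_mat_rayleigh_eigenvalue[OF assms(1)] by blast
  then have "lam \<le> mu" using assms(2) by (simp add: is_min_eigenvalue_def)
  then have "lam * (y \<bullet> y) \<le> mu * (y \<bullet> y)" by (simp add: mult_right_mono)
  with mu[of y] show ?thesis by linarith
qed

lemma psd_mat_eigenvalue_nonneg:
  assumes "psd_mat A" and "is_eigenvalue A l"
  shows "0 \<le> l"
proof -
  obtain v where "v \<noteq> 0" and "A *v v = l *\<^sub>R v"
    using assms(2) by (auto simp: is_eigenvalue_def)
  moreover have "0 \<le> v \<bullet> (A *v v)" using assms(1) by (simp add: psd_mat_def)
  ultimately have "0 \<le> l * (v \<bullet> v)" and "0 < v \<bullet> v" by simp_all
  then show ?thesis by (simp add: zero_le_mult_iff)
qed

lemma symmetric_link_g: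
  assumes "symmetric_mat Theta"
  shows "symmetric_mat (link_g Theta a)"
proof -
  have "Theta $ j $ i = Theta $ i $ j" for i j
    using assms unfolding symmetric_mat_def transpose_def by (metis vec_lambda_beta)
  then show ?thesis
    unfolding symmetric_mat_def transpose_def link_g_def
    by (simp add: vec_eq_iff mult.commute mult.left_commute eq_commute)
qed

lemma link_g_mult_vec:
  assumes "\<And>i. Theta $ i $ i = 1"
  shows "link_g Theta a *v x = (\<chi> i. a $ i * (Theta *v (\<chi> j. a $ j * x $ j)) $ i + (1 - (a $ i)\<^sup>2) * x $ i)"
proof -
  have "(link_g Theta a *v x) $ i = a $ i * (Theta *v (\<chi> j. a $ j * x $ j)) $ i + (1 - (a $ i)\<^sup>2) * x $ i"
    for i
  proof -
    have "(link_g Theta a *v x) $ i = (\<Sum>j\<in>UNIV. Theta $ i $ j * a $ i * a $ j * x $ j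
            + (if j = i then (1 - (a $ i)\<^sup>2) * x $ i else 0))"
      unfolding matrix_vector_mult_def link_g_def
      by (intro trans[OF vec_lambda_beta] sum.cong refl) (auto simp: assms power2_eq_square algebra_simps)
    also have "\<dots> = a $ i * (Theta *v (\<chi> j. a $ j * x $ j)) $ i + (1 - (a $ i)\<^sup>2) * x $ i"
      by (simp add: sum.distrib matrix_vector_mult_def sum_distrib_left algebra_simps)
    finally show ?thesis .
  qed
  then show ?thesis by (simp add: vec_eq_iff)
qed

lemma link_g_quadratic_form:
  assumes "\<And>i. Theta $ i $ i = 1"
  shows "x \<bullet> (link_g Theta a *v x)
    = (\<chi> j. a $ j * x $ j) \<bullet> (Theta *v (\<chi> j. a $ j * x $ j)) + (\<Sum>i\<in>UNIV. (1 - (a $ i)\<^sup>2) * (x $ i)\<^sup>2)"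
  unfolding link_g_mult_vec[OF assms] inner_vec_def sum.distrib[symmetric]
  by (intro sum.cong refl) (simp add: algebra_simps power2_eq_square)

lemma psd_link_g_if_coefficients_nonneg:
  assumes "correlation_mat Theta"
    and rayleigh: "\<And>y. lam * (y \<bullet> y) \<le> y \<bullet> (Theta *v y)"
    and coeff: "\<And>i. 0 \<le> lam * (a $ i)\<^sup>2 + 1 - (a $ i)\<^sup>2"
  shows "psd_mat (link_g Theta a)"
proof -
  have diag: "\<And>i. Theta $ i $ i = 1" and sym: "symmetric_mat Theta"
    using assms(1) by (auto simp: correlation_mat_def psd_mat_def)
  have "0 \<le> x \<bullet> (link_g Theta a *v x)" for x
  proof -
    define y where "y = (\<chi> j. a $ j * x $ j)"
    have "0 \<le> (\<Sum>i\<in>UNIV. (lam * (a $ i)\<^sup>2 + 1 - (a $ i)\<^sup>2) * (x $ i)\<^sup>2)"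
      by (intro sum_nonneg mult_nonneg_nonneg coeff) simp
    also have "\<dots> = lam * (y \<bullet> y) + (\<Sum>i\<in>UNIV. (1 - (a $ i)\<^sup>2) * (x $ i)\<^sup>2)"
      by (simp add: inner_vec_def y_def sum_distrib_left sum.distrib[symmetric] algebra_simps power2_eq_square)
    also have "\<dots> \<le> x \<bullet> (link_g Theta a *v x)"
      using rayleigh[of y] by (simp add: link_g_quadratic_form[OF diag] y_def)
    finally show ?thesis .
  qed
  with symmetric_link_g[OF sym] show ?thesis by (simp add: psd_mat_def)
qed

lemma link_coefficient_nonneg:
  fixes lam a aM am :: real
  assumes "0 \<le> lam" and "0 \<le> am" and "am \<le> \<bar>a\<bar>" and "\<bar>a\<bar> \<le> aM"
    and "aM\<^sup>2 - 1 \<le> lam * am\<^sup>2"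
  shows "0 \<le> lam * a\<^sup>2 + 1 - a\<^sup>2"
proof (cases "lam \<ge> 1")
  case True
  then show ?thesis using mult_right_mono[OF True zero_le_power2[of a]] by simp
next
  case False
  have "a\<^sup>2 \<le> aM\<^sup>2" and "am\<^sup>2 \<le> a\<^sup>2"
    using assms(2-4) by (metis abs_ge_zero power2_abs power_mono)+
  then have "(1 - lam) * a\<^sup>2 \<le> (1 - lam) * aM\<^sup>2" and "lam * am\<^sup>2 \<le> lam * aM\<^sup>2"
    using False \<open>0 \<le> lam\<close> by (simp_all add: mult_left_mono)
  with assms(5) show ?thesis by (simp add: algebra_simps)
qed

theorem mainTheorem1:
  fixes Theta :: "real^'n^'n" and alpha :: "real^'n" and lam :: real
  assumes "correlation_mat Theta"
    and "\<forall>j. alpha $ j \<noteq> 0"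
    and "is_min_eigenvalue Theta lam"
    and "lam \<ge> ((Max (range (\<lambda>j. \<bar>alpha $ j\<bar>)))\<^sup>2 - 1) / (Min (range (\<lambda>j. \<bar>alpha $ j\<bar>)))\<^sup>2"
  shows "psd_mat (link_g Theta alpha)"
proof (rule psd_link_g_if_coefficients_nonneg[OF assms(1)])
  have psd: "psd_mat Theta" using assms(1) by (simp add: correlation_mat_def)
  then show "lam * (y \<bullet> y) \<le> y \<bullet> (Theta *v y)" for y
    using min_eigenvalue_le_rayleigh[OF _ assms(3)] by (simp add: psd_mat_def)
  have "0 \<le> lam"
    using psd_mat_eigenvalue_nonneg[OF psd] assms(3) by (simp add: is_min_eigenvalue_def)
  define aM where "aM = Max (range (\<lambda>j. \<bar>alpha $ j\<bar>))"
  define am where "am = Min (range (\<lambda>j. \<bar>alpha $ j\<bar>))"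
  have "am \<in> range (\<lambda>j. \<bar>alpha $ j\<bar>)" unfolding am_def by (intro Min_in) auto
  then have "0 < am" using assms(2) by auto
  then have "aM\<^sup>2 - 1 \<le> lam * am\<^sup>2"
    using assms(4) by (simp add: aM_def[symmetric] am_def[symmetric] pos_divide_le_eq)
  moreover have "am \<le> \<bar>alpha $ i\<bar>" and "\<bar>alpha $ i\<bar> \<le> aM" for i
    unfolding am_def aM_def by auto
  ultimately show "0 \<le> lam * (alpha $ i)\<^sup>2 + 1 - (alpha $ i)\<^sup>2" for i
    using \<open>0 \<le> lam\<close> \<open>0 < am\<close> by (intro link_coefficient_nonneg[of _ am _ aM]) auto
qed

end
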